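(* Let $f_i=h_i+\overline{g_i}\in S_H$ with $h_i(z)+g_i(z)=\dfrac{z}{1-z}$ for $i=1,2$. Then for every $0\le t\le1$ the map $f=tf_1+(1-t)f_2$ belongs to $COD_H(0)$, i.e. $f\in S_H$ and $f$ maps $E$ onto a domain that is convex both in the direction of the real axis and in the direction of the imaginary axis.
   Context: $E=\{z\in\mathbb{C}:|z|<1\}$. $S_H$ denotes the class of harmonic, univalent, sense-preserving mappings $f=h+\overline{g}$ of $E$ ($h,g$ analytic, $h'\ne0$, $|g'/h'|<1$) normalized by $f(0)=0$, $f_z(0)=1$. A domain $\Omega$ is convex in the direction $\phi$ ($0\le\phi<\pi$) if every line parallel to the line through $0$ and $e^{i\phi}$ has connected or empty intersection with $\Omega$. $COD_H(\theta)$, $\theta\in[0,\pi/2)$, is the class of $f\in S_H$ mapping $E$ onto domains convex in the directions $\theta$ and $\theta+\pi/2$. *)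

theory Defs
  imports "HOL-Analysis.Analysis"
begin

abbreviation unit_disk :: "complex set" where
  "unit_disk \<equiv> ball 0 1"

definition SH_pair :: "(complex \<Rightarrow> complex) \<Rightarrow> (complex \<Rightarrow> complex) \<Rightarrow> bool" where
  "SH_pair h g \<longleftrightarrow>
     h holomorphic_on unit_disk \<and> g holomorphic_on unit_disk \<and>
     (\<forall>z\<in>unit_disk. deriv h z \<noteq> 0 \<and> norm (deriv g z / deriv h z) < 1) \<and>
     inj_on (\<lambda>z. h z + cnj (g z)) unit_disk \<and>
     h 0 + cnj (g 0) = 0 \<and> deriv h 0 = 1"

definition in_SH :: "(complex \<Rightarrow> complex) \<Rightarrow> bool" where
  "in_SH f \<longleftrightarrow> (\<exists>h g. SH_pair h g \<and> (\<forall>z\<in>unit_disk. f z = h z + cnj (g z)))"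

definition convex_in_direction :: "real \<Rightarrow> complex set \<Rightarrow> bool" where
  "convex_in_direction \<phi> \<Omega> \<longleftrightarrow>
     (\<forall>w. connected ({w + of_real s * cis \<phi> | s. True} \<inter> \<Omega>))"

definition COD_H :: "real \<Rightarrow> (complex \<Rightarrow> complex) \<Rightarrow> bool" where
  "COD_H \<theta> f \<longleftrightarrow> in_SH f \<and>
     convex_in_direction \<theta> (f ` unit_disk) \<and>
     convex_in_direction (\<theta> + pi / 2) (f ` unit_disk)"

end

theory Submission
  imports Defs
begin

text \<open>In the coordinate \<open>w = z / (1 - z)\<close> of the half-plane \<open>Re w > -1/2\<close>, a harmonic map
  \<open>f = h + conj g\<close> with \<open>h + g = z / (1 - z)\<close> becomes \<open>w \<mapsto> Re w + i Im \<Psi>(w)\<close>, where \<open>\<Psi>\<close> is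
  \<open>h - g\<close> in the new coordinate. The dilatation condition \<open>|g'| < |h'|\<close> says precisely that
  \<open>Re \<Psi>' = Re ((h' - g') / (h' + g')) > 0\<close>, so \<open>\<Psi>\<close> is strictly monotone in the sense of
  Noshiro and Warschawski. Consequently \<open>Im \<Psi>\<close> increases along vertical lines, which gives
  univalence and the convexity of \<open>f(E)\<close> in the vertical direction; in the horizontal direction,
  monotonicity forbids a level set of \<open>Im \<Psi>\<close> to skip a vertical line. All hypotheses on
  \<open>(h, g)\<close> except \<open>|g'| < |h'|\<close> are linear, and for fixed \<open>h' + g'\<close> that one describes a
  half-plane of values of \<open>h'\<close>, so the class is closed under convex combinations.\<close>

definition strictly_monotone_on :: "complex set \<Rightarrow> (complex \<Rightarrow> complex) \<Rightarrow> bool" where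
  "strictly_monotone_on S \<Psi> \<longleftrightarrow>
     (\<forall>w\<in>S. \<forall>w'\<in>S. w \<noteq> w' \<longrightarrow> 0 < Re ((\<Psi> w' - \<Psi> w) * cnj (w' - w)))"

text \<open>Noshiro--Warschawski: along the segment from \<open>w\<close> to \<open>w'\<close> the function
  \<open>\<tau> \<mapsto> Re (\<Psi> (w + \<tau> (w' - w)) cnj (w' - w))\<close> has derivative \<open>Re D * |w' - w|\<^sup>2 > 0\<close>.\<close>
lemma strictly_monotone_on_Re_deriv_pos:
  assumes "convex S"
    and deriv_pos: "\<And>w. w \<in> S \<Longrightarrow> \<exists>D. (\<Psi> has_field_derivative D) (at w) \<and> 0 < Re D"
  shows "strictly_monotone_on S \<Psi>"
  unfolding strictly_monotone_on_def
proof (intro ballI impI)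
  fix w w' assume w: "w \<in> S" and w': "w' \<in> S" and "w \<noteq> w'"
  define \<Delta> where "\<Delta> = w' - w"
  have "\<Delta> \<noteq> 0" using \<open>w \<noteq> w'\<close> by (simp add: \<Delta>_def)
  define k where "k \<tau> = Re (\<Psi> (w + of_real \<tau> * \<Delta>) * cnj \<Delta>)" for \<tau> :: real
  have "\<exists>y. DERIV k \<tau> :> y \<and> 0 < y" if "0 \<le> \<tau>" "\<tau> \<le> 1" for \<tau>
  proof -
    have "w + of_real \<tau> * \<Delta> = (1 - \<tau>) *\<^sub>R w + \<tau> *\<^sub>R w'"
      by (simp add: \<Delta>_def scaleR_conv_of_real algebra_simps)
    also have "\<dots> \<in> S" using convexD[OF \<open>convex S\<close> w w'] that by simp
    finally obtain D where D: "(\<Psi> has_field_derivative D) (at (w + of_real \<tau> * \<Delta>))"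
      and "0 < Re D" using deriv_pos by blast
    have segment: "((\<lambda>\<tau>. w + of_real \<tau> * \<Delta>) has_vector_derivative \<Delta>) (at \<tau>)"
      by (rule derivative_eq_intros refl | simp)+
    have "((\<lambda>\<tau>. \<Psi> (w + of_real \<tau> * \<Delta>) * cnj \<Delta>) has_vector_derivative \<Delta> * (D * cnj \<Delta>)) (at \<tau>)"
      using field_vector_diff_chain_at[OF segment DERIV_cmult_right[OF D]] by (simp add: o_def)
    hence "DERIV k \<tau> :> Re (\<Delta> * (D * cnj \<Delta>))"
      unfolding k_def by (rule has_field_derivative_Re)
    moreover have "\<Delta> * (D * cnj \<Delta>) = D * of_real (norm \<Delta> ^ 2)"
      by (metis complex_norm_square mult.left_commute of_real_power)
    ultimately show ?thesis using \<open>0 < Re D\<close> \<open>\<Delta> \<noteq> 0\<close> by auto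
  qed
  then have "k 0 < k 1" using DERIV_pos_imp_increasing[of 0 1 k] by simp
  then show "0 < Re ((\<Psi> w' - \<Psi> w) * cnj (w' - w))"
    by (simp add: k_def \<Delta>_def algebra_simps)
qed

lemma strictly_monotone_onD_Complex:
  assumes "strictly_monotone_on S \<Psi>" "Complex x s \<in> S" "Complex x' s' \<in> S" "(x, s) \<noteq> (x', s')"
  shows "0 < (Re (\<Psi> (Complex x' s')) - Re (\<Psi> (Complex x s))) * (x' - x)
           + (Im (\<Psi> (Complex x' s')) - Im (\<Psi> (Complex x s))) * (s' - s)"
proof -
  have "Complex x s \<noteq> Complex x' s'" using assms(4) by simp
  with assms(1-3) have "0 < Re ((\<Psi> (Complex x' s') - \<Psi> (Complex x s)) * cnj (Complex x' s' - Complex x s))"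
    unfolding strictly_monotone_on_def by blast
  then show ?thesis by (simp add: algebra_simps)
qed

lemma strictly_monotone_on_Im_increasing:
  assumes "strictly_monotone_on S \<Psi>" "Complex x s \<in> S" "Complex x s' \<in> S" "s < s'"
  shows "Im (\<Psi> (Complex x s)) < Im (\<Psi> (Complex x s'))"
proof -
  have "0 < (Im (\<Psi> (Complex x s')) - Im (\<Psi> (Complex x s))) * (s' - s)"
    using strictly_monotone_onD_Complex[OF assms(1-3)] \<open>s < s'\<close> by simp
  with \<open>s < s'\<close> show ?thesis by (simp add: zero_less_mult_iff)
qed

lemma strictly_monotone_on_cnj:
  assumes "strictly_monotone_on S \<Psi>"
  shows "strictly_monotone_on (cnj ` S) (\<lambda>w. cnj (\<Psi> (cnj w)))"
proof -
  have "Re (cnj a * cnj (cnj b)) = Re (a * cnj b)" for a b :: complex by simp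
  then show ?thesis using assms unfolding strictly_monotone_on_def
    by (smt (verit) complex_cnj_cnj complex_cnj_diff image_iff)
qed

text \<open>If the level \<open>Im \<Psi> = d\<close> were crossed over \<open>x\<^sub>1\<close> and \<open>x\<^sub>2\<close> but the whole vertical line
  over \<open>x\<^sub>0\<close> stayed \<open>\<delta>\<close> below, monotonicity between \<open>(x\<^sub>1, s\<^sub>1)\<close> and \<open>(x\<^sub>0, \<sigma>)\<close> would force
  \<open>Re \<Psi>\<close> to grow linearly in \<open>\<sigma>\<close> at \<open>x\<^sub>0\<close>, while monotonicity between \<open>(x\<^sub>0, \<sigma>)\<close> and
  \<open>(x\<^sub>2, s\<^sub>2)\<close> bounds it by \<open>Re \<Psi> (x\<^sub>2, s\<^sub>2)\<close>.\<close>
lemma strictly_monotone_on_half_plane_no_valley: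
  assumes mono: "strictly_monotone_on {w. Re w > a} \<Psi>"
    and x: "a < x\<^sub>1" "x\<^sub>1 < x\<^sub>0" "x\<^sub>0 < x\<^sub>2" and "0 < \<delta>"
    and below1: "\<And>\<sigma>. Im (\<Psi> (Complex x\<^sub>0 \<sigma>)) + \<delta> \<le> Im (\<Psi> (Complex x\<^sub>1 s\<^sub>1))"
    and below2: "\<And>\<sigma>. Im (\<Psi> (Complex x\<^sub>0 \<sigma>)) + \<delta> \<le> Im (\<Psi> (Complex x\<^sub>2 s\<^sub>2))"
  shows False
proof -
  define U where "U x s = Re (\<Psi> (Complex x s))" for x s
  define V where "V x s = Im (\<Psi> (Complex x s))" for x s
  have N: "0 < (U x' s' - U x s) * (x' - x) + (V x' s' - V x s) * (s' - s)"
    if "a < x" "a < x'" "x < x'" for x s x' s'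
    using strictly_monotone_onD_Complex[OF mono, of x s x' s'] that unfolding U_def V_def by simp
  define u where "u = U x\<^sub>2 s\<^sub>2 - U x\<^sub>1 s\<^sub>1"
  define \<sigma> where "\<sigma> = max s\<^sub>1 s\<^sub>2 + \<bar>u\<bar> * (x\<^sub>0 - x\<^sub>1) / \<delta> + 1"
  have "0 \<le> \<bar>u\<bar> * (x\<^sub>0 - x\<^sub>1) / \<delta>" using x \<open>0 < \<delta>\<close> by simp
  then have "s\<^sub>1 < \<sigma>" "s\<^sub>2 < \<sigma>" "\<bar>u\<bar> * (x\<^sub>0 - x\<^sub>1) / \<delta> + 1 \<le> \<sigma> - s\<^sub>1"
    unfolding \<sigma>_def by linarith+
  have "(V x\<^sub>0 \<sigma> - V x\<^sub>1 s\<^sub>1) * (\<sigma> - s\<^sub>1) \<le> - \<delta> * (\<sigma> - s\<^sub>1)"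
    using below1[of \<sigma>] \<open>s\<^sub>1 < \<sigma>\<close> unfolding V_def by (intro mult_right_mono) simp_all
  with N[of x\<^sub>1 x\<^sub>0 \<sigma> s\<^sub>1] x have "\<delta> * (\<sigma> - s\<^sub>1) < (U x\<^sub>0 \<sigma> - U x\<^sub>1 s\<^sub>1) * (x\<^sub>0 - x\<^sub>1)"
    by linarith
  also have "\<dots> < u * (x\<^sub>0 - x\<^sub>1)"
  proof (rule mult_strict_right_mono)
    have "(V x\<^sub>2 s\<^sub>2 - V x\<^sub>0 \<sigma>) * (s\<^sub>2 - \<sigma>) \<le> 0"
      using below2[of \<sigma>] \<open>0 < \<delta>\<close> \<open>s\<^sub>2 < \<sigma>\<close> unfolding V_def
      by (simp add: mult_nonneg_nonpos)
    with N[of x\<^sub>0 x\<^sub>2 s\<^sub>2 \<sigma>] x have "0 < (U x\<^sub>2 s\<^sub>2 - U x\<^sub>0 \<sigma>) * (x\<^sub>2 - x\<^sub>0)"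
      by linarith
    with x show "U x\<^sub>0 \<sigma> - U x\<^sub>1 s\<^sub>1 < u"
      by (simp add: u_def zero_less_mult_iff)
  qed (use x in simp)
  also have "\<dots> \<le> \<bar>u\<bar> * (x\<^sub>0 - x\<^sub>1)" using x by (simp add: mult_right_mono)
  also have "\<dots> < \<delta> * (\<bar>u\<bar> * (x\<^sub>0 - x\<^sub>1) / \<delta> + 1)"
    using \<open>0 < \<delta>\<close> by (simp add: distrib_left)
  also have "\<dots> \<le> \<delta> * (\<sigma> - s\<^sub>1)"
    using \<open>0 < \<delta>\<close> \<open>\<bar>u\<bar> * (x\<^sub>0 - x\<^sub>1) / \<delta> + 1 \<le> \<sigma> - s\<^sub>1\<close> by simp
  finally show False by simp
qed

lemma strictly_monotone_on_half_plane_level_above: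
  assumes mono: "strictly_monotone_on {w. Re w > a} \<Psi>"
    and x: "a < x\<^sub>1" "x\<^sub>1 < x\<^sub>0" "x\<^sub>0 < x\<^sub>2"
    and "Im (\<Psi> (Complex x\<^sub>1 s\<^sub>1)) = d" "Im (\<Psi> (Complex x\<^sub>2 s\<^sub>2)) = d"
  shows "\<exists>\<sigma>. d \<le> Im (\<Psi> (Complex x\<^sub>0 \<sigma>))"
proof (rule ccontr)
  assume "\<nexists>\<sigma>. d \<le> Im (\<Psi> (Complex x\<^sub>0 \<sigma>))"
  then have below: "Im (\<Psi> (Complex x\<^sub>0 \<sigma>)) < d" for \<sigma> by (meson not_le)
  define \<delta> where "\<delta> = min (Im (\<Psi> (Complex x\<^sub>1 (s\<^sub>1 + 1)))) (Im (\<Psi> (Complex x\<^sub>2 (s\<^sub>2 + 1)))) - d"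
  have "d < Im (\<Psi> (Complex x\<^sub>1 (s\<^sub>1 + 1)))" "d < Im (\<Psi> (Complex x\<^sub>2 (s\<^sub>2 + 1)))"
    using strictly_monotone_on_Im_increasing[OF mono, of x\<^sub>1 s\<^sub>1 "s\<^sub>1 + 1"]
      strictly_monotone_on_Im_increasing[OF mono, of x\<^sub>2 s\<^sub>2 "s\<^sub>2 + 1"] x assms(5,6)
    by auto
  then have "0 < \<delta>" by (simp add: \<delta>_def)
  have "Im (\<Psi> (Complex x\<^sub>0 \<sigma>)) + \<delta> \<le> Im (\<Psi> (Complex x\<^sub>1 (s\<^sub>1 + 1)))"
    and "Im (\<Psi> (Complex x\<^sub>0 \<sigma>)) + \<delta> \<le> Im (\<Psi> (Complex x\<^sub>2 (s\<^sub>2 + 1)))" for \<sigma>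
    using below[of \<sigma>] by (auto simp: \<delta>_def)
  then show False
    by (rule strictly_monotone_on_half_plane_no_valley[OF mono x \<open>0 < \<delta>\<close>])
qed

lemma cnj_image_half_plane: "cnj ` {w. Re w > a} = {w. Re w > a}"
  by (auto intro!: image_eqI[of _ cnj "cnj w" for w])

lemma strictly_monotone_on_half_plane_level_below:
  assumes mono: "strictly_monotone_on {w. Re w > a} \<Psi>"
    and x: "a < x\<^sub>1" "x\<^sub>1 < x\<^sub>0" "x\<^sub>0 < x\<^sub>2"
    and "Im (\<Psi> (Complex x\<^sub>1 s\<^sub>1)) = d" "Im (\<Psi> (Complex x\<^sub>2 s\<^sub>2)) = d"
  shows "\<exists>\<sigma>. Im (\<Psi> (Complex x\<^sub>0 \<sigma>)) \<le> d"
proof -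
  have cnj_Complex: "cnj (Complex x s) = Complex x (- s)" for x s
    by (simp add: complex_eq_iff)
  have "strictly_monotone_on {w. Re w > a} (\<lambda>w. cnj (\<Psi> (cnj w)))"
    using strictly_monotone_on_cnj[OF mono] by (simp only: cnj_image_half_plane)
  from strictly_monotone_on_half_plane_level_above[OF this x, of "- s\<^sub>1" "- d" "- s\<^sub>2"] assms(5,6)
  obtain \<sigma> where "- d \<le> - Im (\<Psi> (Complex x\<^sub>0 (- \<sigma>)))" by (auto simp: cnj_Complex)
  then show ?thesis by auto
qed

lemma strictly_monotone_on_half_plane_level_connected:
  assumes mono: "strictly_monotone_on {w. Re w > a} \<Psi>"
    and cont: "continuous_on {w. Re w > a} \<Psi>"
  shows "connected {x. a < x \<and> (\<exists>s. Im (\<Psi> (Complex x s)) = d)}"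
  unfolding is_interval_connected_1[symmetric] is_interval_1
proof (intro ballI allI impI, elim conjE)
  fix x\<^sub>1 x\<^sub>2 x\<^sub>0
  assume "x\<^sub>1 \<in> {x. a < x \<and> (\<exists>s. Im (\<Psi> (Complex x s)) = d)}"
    and "x\<^sub>2 \<in> {x. a < x \<and> (\<exists>s. Im (\<Psi> (Complex x s)) = d)}"
    and le: "x\<^sub>1 \<le> x\<^sub>0" "x\<^sub>0 \<le> x\<^sub>2"
  then obtain s\<^sub>1 s\<^sub>2 where x: "a < x\<^sub>1" "a < x\<^sub>2"
    and s: "Im (\<Psi> (Complex x\<^sub>1 s\<^sub>1)) = d" "Im (\<Psi> (Complex x\<^sub>2 s\<^sub>2)) = d" by auto
  show "x\<^sub>0 \<in> {x. a < x \<and> (\<exists>s. Im (\<Psi> (Complex x s)) = d)}"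
  proof (cases "x\<^sub>0 = x\<^sub>1 \<or> x\<^sub>0 = x\<^sub>2")
    case True
    with x s show ?thesis by auto
  next
    case False
    with le x have lt: "a < x\<^sub>1" "x\<^sub>1 < x\<^sub>0" "x\<^sub>0 < x\<^sub>2" by auto
    obtain \<alpha> \<beta> where \<alpha>: "Im (\<Psi> (Complex x\<^sub>0 \<alpha>)) \<le> d" and \<beta>: "d \<le> Im (\<Psi> (Complex x\<^sub>0 \<beta>))"
      using strictly_monotone_on_half_plane_level_below[OF mono lt s]
        strictly_monotone_on_half_plane_level_above[OF mono lt s] by blast
    have "\<alpha> \<le> \<beta>"
      using strictly_monotone_on_Im_increasing[OF mono, of x\<^sub>0 \<beta> \<alpha>] \<alpha> \<beta> lt by force
    have "continuous_on UNIV (\<lambda>s. Complex x\<^sub>0 s)"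
      by (intro continuous_intros)
    then have "continuous_on UNIV (\<lambda>s. Im (\<Psi> (Complex x\<^sub>0 s)))"
      using lt by (intro continuous_intros continuous_on_compose2[OF cont]) auto
    then obtain \<sigma> where "Im (\<Psi> (Complex x\<^sub>0 \<sigma>)) = d"
      using IVT'[of "\<lambda>s. Im (\<Psi> (Complex x\<^sub>0 s))", OF \<alpha> \<beta> \<open>\<alpha> \<le> \<beta>\<close>]
      by (auto intro: continuous_on_subset)
    with lt show ?thesis by auto
  qed
qed

lemma convex_in_direction_0_iff:
  "convex_in_direction 0 \<Omega> \<longleftrightarrow> (\<forall>d. connected ({z. Im z = d} \<inter> \<Omega>))"
proof -
  have "{w + of_real s * cis 0 | s. True} = {z. Im z = Im w}" for w
  proof (intro set_eqI iffI)
    fix z assume "z \<in> {z. Im z = Im w}"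
    then have "z = w + of_real (Re z - Re w) * cis 0" by (simp add: complex_eq_iff)
    then show "z \<in> {w + of_real s * cis 0 | s. True}" by blast
  qed auto
  then show ?thesis
    unfolding convex_in_direction_def by (metis complex.sel(2))
qed

lemma convex_in_direction_pi_half_iff:
  "convex_in_direction (pi / 2) \<Omega> \<longleftrightarrow> (\<forall>c. connected ({z. Re z = c} \<inter> \<Omega>))"
proof -
  have "{w + of_real s * cis (pi / 2) | s. True} = {z. Re z = Re w}" for w
  proof (intro set_eqI iffI)
    fix z assume "z \<in> {z. Re z = Re w}"
    then have "z = w + of_real (Im z - Im w) * cis (pi / 2)" by (simp add: complex_eq_iff)
    then show "z \<in> {w + of_real s * cis (pi / 2) | s. True}" by blast
  qed auto
  then show ?thesis
    unfolding convex_in_direction_def by (metis complex.sel(1))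
qed

definition half_plane_to_disk :: "complex \<Rightarrow> complex" where
  "half_plane_to_disk w = w / (1 + w)"

lemma Re_disk_to_half_plane_gt:
  assumes "z \<in> unit_disk"
  shows "Re (z / (1 - z)) > - 1 / 2"
proof -
  have "1 - z \<noteq> 0" using assms by auto
  then have pos: "0 < (1 - Re z)\<^sup>2 + (Im z)\<^sup>2"
    by (simp add: sum_power2_gt_zero_iff complex_eq_iff)
  have "(Re z)\<^sup>2 + (Im z)\<^sup>2 < 1"
    using assms by (simp add: cmod_def real_sqrt_less_iff)
  moreover have "Re (z / (1 - z)) = (Re z - ((Re z)\<^sup>2 + (Im z)\<^sup>2)) / ((1 - Re z)\<^sup>2 + (Im z)\<^sup>2)"
    by (simp add: Re_divide power2_eq_square algebra_simps)
  ultimately show ?thesis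
    using pos by (simp add: less_divide_eq power2_eq_square algebra_simps)
qed

lemma half_plane_to_disk_in_disk:
  assumes "Re w > - 1 / 2"
  shows "half_plane_to_disk w \<in> unit_disk"
proof -
  have "1 + w \<noteq> 0" using assms by (auto simp: complex_eq_iff)
  have "(Re w)\<^sup>2 < (1 + Re w)\<^sup>2" using assms by (simp add: power2_eq_square algebra_simps)
  then have "norm w < norm (1 + w)" by (simp add: cmod_def real_sqrt_less_iff)
  with \<open>1 + w \<noteq> 0\<close> show ?thesis
    by (simp add: half_plane_to_disk_def norm_divide divide_less_eq)
qed

lemma disk_to_half_plane_to_disk:
  assumes "z \<in> unit_disk"
  shows "half_plane_to_disk (z / (1 - z)) = z"
proof -
  have "1 - z \<noteq> 0" using assms by auto
  then have "1 + z / (1 - z) = 1 / (1 - z)" by (simp add: field_simps)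
  with \<open>1 - z \<noteq> 0\<close> show ?thesis by (simp add: half_plane_to_disk_def)
qed

lemma half_plane_to_disk_to_half_plane:
  assumes "Re w > - 1 / 2"
  shows "half_plane_to_disk w / (1 - half_plane_to_disk w) = w"
proof -
  have "1 + w \<noteq> 0" using assms by (auto simp: complex_eq_iff)
  then show ?thesis by (simp add: half_plane_to_disk_def field_simps)
qed

lemma has_field_derivative_half_plane_to_disk:
  assumes "1 + w \<noteq> 0"
  shows "(half_plane_to_disk has_field_derivative 1 / (1 + w)\<^sup>2) (at w)"
  unfolding half_plane_to_disk_def[abs_def]
  by (rule derivative_eq_intros refl | use assms in \<open>simp add: field_simps power2_eq_square\<close>)+

lemma Re_diff_div_add_pos:
  fixes a b :: complex
  assumes "norm b < norm a"
  shows "Re ((a - b) / (a + b)) > 0"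
proof -
  have "Re ((a - b) * cnj (a + b)) = (norm a)\<^sup>2 - (norm b)\<^sup>2"
    unfolding cmod_power2 by (simp add: algebra_simps power2_eq_square)
  also have "\<dots> > 0"
    using assms by (simp add: power_strict_mono)
  finally have "Re ((a - b) * cnj (a + b)) > 0" .
  moreover have "a + b \<noteq> 0" using assms by (metis add_eq_0_iff norm_minus_cancel order_less_irrefl)
  ultimately show ?thesis
    by (subst complex_div_cnj) (simp add: Re_divide_of_real del: complex_cnj_add)
qed

text \<open>For fixed \<open>c\<close>, the condition \<open>|c - a| < |a|\<close> says that \<open>a\<close> lies in an open half-plane, so
  it survives convex combinations.\<close>
lemma norm_diff_lt_iff_Re:
  fixes a c :: complex
  shows "norm (c - a) < norm a \<longleftrightarrow> (norm c)\<^sup>2 < 2 * Re (a * cnj c)"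
proof -
  have "(norm (c - a))\<^sup>2 = (norm c)\<^sup>2 - 2 * Re (a * cnj c) + (norm a)\<^sup>2"
    unfolding cmod_power2 by (simp add: algebra_simps power2_eq_square)
  moreover have "norm (c - a) < norm a \<longleftrightarrow> (norm (c - a))\<^sup>2 < (norm a)\<^sup>2"
    using abs_le_square_iff[of "norm a" "norm (c - a)"] by (simp add: not_le[symmetric])
  ultimately show ?thesis by linarith
qed

lemma norm_lt_convex_combination:
  fixes a\<^sub>1 a\<^sub>2 b\<^sub>1 b\<^sub>2 c :: complex
  assumes "a\<^sub>1 + b\<^sub>1 = c" "a\<^sub>2 + b\<^sub>2 = c" "norm b\<^sub>1 < norm a\<^sub>1" "norm b\<^sub>2 < norm a\<^sub>2"
    and "0 \<le> t" "t \<le> 1"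
  shows "norm (of_real t * b\<^sub>1 + of_real (1 - t) * b\<^sub>2) < norm (of_real t * a\<^sub>1 + of_real (1 - t) * a\<^sub>2)"
proof -
  have b: "b\<^sub>1 = c - a\<^sub>1" "b\<^sub>2 = c - a\<^sub>2"
    using assms(1,2) by (auto simp: algebra_simps)
  have b': "of_real t * b\<^sub>1 + of_real (1 - t) * b\<^sub>2 = c - (of_real t * a\<^sub>1 + of_real (1 - t) * a\<^sub>2)"
    unfolding b by (simp add: algebra_simps)
  have r: "(norm c)\<^sup>2 < 2 * Re (a\<^sub>1 * cnj c)" "(norm c)\<^sup>2 < 2 * Re (a\<^sub>2 * cnj c)"
    using assms(3,4) unfolding b norm_diff_lt_iff_Re by auto
  have "(norm c)\<^sup>2 = t * (norm c)\<^sup>2 + (1 - t) * (norm c)\<^sup>2" by (simp add: algebra_simps)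
  also have "\<dots> < t * (2 * Re (a\<^sub>1 * cnj c)) + (1 - t) * (2 * Re (a\<^sub>2 * cnj c))"
  proof (cases "t = 0")
    case True
    with r show ?thesis by simp
  next
    case False
    with assms(5) have "0 < t" by simp
    with r assms(6) show ?thesis
      by (intro add_less_le_mono mult_strict_left_mono mult_left_mono) auto
  qed
  also have "\<dots> = 2 * Re ((of_real t * a\<^sub>1 + of_real (1 - t) * a\<^sub>2) * cnj c)"
    by (simp add: algebra_simps)
  finally show ?thesis unfolding b' norm_diff_lt_iff_Re .
qed

locale half_plane_shear =
  fixes h g :: "complex \<Rightarrow> complex"
  assumes holomorphic_h: "h holomorphic_on unit_disk"
    and holomorphic_g: "g holomorphic_on unit_disk"
    and add_eq: "\<And>z. z \<in> unit_disk \<Longrightarrow> h z + g z = z / (1 - z)"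
    and norm_deriv_less: "\<And>z. z \<in> unit_disk \<Longrightarrow> norm (deriv g z) < norm (deriv h z)"
begin

definition \<Psi> :: "complex \<Rightarrow> complex" where
  "\<Psi> w = h (half_plane_to_disk w) - g (half_plane_to_disk w)"

lemma deriv_add_eq:
  assumes "z \<in> unit_disk"
  shows "deriv h z + deriv g z = 1 / (1 - z)\<^sup>2"
proof -
  have "1 - z \<noteq> 0" using assms by auto
  have "((\<lambda>z. z / (1 - z)) has_field_derivative 1 / (1 - z)\<^sup>2) (at z)"
    by (rule derivative_eq_intros refl | use \<open>1 - z \<noteq> 0\<close> in \<open>simp add: field_simps power2_eq_square\<close>)+
  then have "((\<lambda>z. h z + g z) has_field_derivative 1 / (1 - z)\<^sup>2) (at z)"
    by (rule has_field_derivative_transform_within_open[OF _ open_ball assms]) (simp add: add_eq)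
  moreover have "((\<lambda>z. h z + g z) has_field_derivative deriv h z + deriv g z) (at z)"
    using holomorphic_derivI[OF holomorphic_h open_ball assms]
      holomorphic_derivI[OF holomorphic_g open_ball assms] by (rule derivative_intros)
  ultimately show ?thesis using DERIV_unique by blast
qed

lemma has_field_derivative_\<Psi>:
  assumes "Re w > - 1 / 2"
  defines "z \<equiv> half_plane_to_disk w"
  shows "(\<Psi> has_field_derivative (deriv h z - deriv g z) / (deriv h z + deriv g z)) (at w)"
proof -
  have "1 + w \<noteq> 0" using assms by (auto simp: complex_eq_iff)
  have z: "z \<in> unit_disk" unfolding z_def using half_plane_to_disk_in_disk[OF assms(1)] .
  have "1 - z = 1 / (1 + w)" using \<open>1 + w \<noteq> 0\<close> by (simp add: z_def half_plane_to_disk_def field_simps)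
  then have chain: "1 / (1 + w)\<^sup>2 = 1 / (deriv h z + deriv g z)"
    by (simp add: deriv_add_eq[OF z] power_one_over)
  have "(h has_field_derivative deriv h z) (at (half_plane_to_disk w))"
    "(g has_field_derivative deriv g z) (at (half_plane_to_disk w))"
    using holomorphic_derivI[OF holomorphic_h open_ball z] holomorphic_derivI[OF holomorphic_g open_ball z]
    by (simp_all add: z_def)
  then have "(\<Psi> has_field_derivative (deriv h z - deriv g z) * (1 / (1 + w)\<^sup>2)) (at w)"
    unfolding \<Psi>_def[abs_def] left_diff_distrib
    by (intro DERIV_diff DERIV_chain2[OF _ has_field_derivative_half_plane_to_disk[OF \<open>1 + w \<noteq> 0\<close>]])
  then show ?thesis by (simp add: chain)
qed

lemma \<Psi>_strictly_monotone: "strictly_monotone_on {w. Re w > - 1 / 2} \<Psi>"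
proof (rule strictly_monotone_on_Re_deriv_pos[OF convex_halfspace_Re_gt])
  fix w assume "w \<in> {w. Re w > - 1 / 2}"
  then have w: "Re w > - 1 / 2" by simp
  then have "half_plane_to_disk w \<in> unit_disk" by (rule half_plane_to_disk_in_disk)
  then show "\<exists>D. (\<Psi> has_field_derivative D) (at w) \<and> 0 < Re D"
    using has_field_derivative_\<Psi>[OF w] Re_diff_div_add_pos norm_deriv_less by blast
qed

lemma continuous_on_\<Psi>: "continuous_on {w. Re w > - 1 / 2} \<Psi>"
proof (intro continuous_at_imp_continuous_on ballI)
  fix w assume "w \<in> {w. Re w > - 1 / 2}"
  then show "isCont \<Psi> w" by (intro DERIV_isCont[OF has_field_derivative_\<Psi>]) simp
qed

lemma shear_half_plane_to_disk:
  assumes "Re w > - 1 / 2"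
  shows "h (half_plane_to_disk w) + cnj (g (half_plane_to_disk w)) = Complex (Re w) (Im (\<Psi> w))"
proof -
  have "Re (h (half_plane_to_disk w) + g (half_plane_to_disk w)) = Re w"
    using add_eq[OF half_plane_to_disk_in_disk[OF assms]]
      half_plane_to_disk_to_half_plane[OF assms] by simp
  then show ?thesis by (simp add: complex_eq_iff \<Psi>_def)
qed

lemma image_shear:
  "(\<lambda>z. h z + cnj (g z)) ` unit_disk = (\<lambda>w. Complex (Re w) (Im (\<Psi> w))) ` {w. Re w > - 1 / 2}"
proof (intro equalityI image_subsetI)
  fix z :: complex assume "z \<in> unit_disk"
  then have w: "Re (z / (1 - z)) > - 1 / 2" and "half_plane_to_disk (z / (1 - z)) = z"
    using Re_disk_to_half_plane_gt disk_to_half_plane_to_disk by simp_all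
  then have "h z + cnj (g z) = Complex (Re (z / (1 - z))) (Im (\<Psi> (z / (1 - z))))"
    using shear_half_plane_to_disk[OF w] by simp
  with w show "h z + cnj (g z) \<in> (\<lambda>w. Complex (Re w) (Im (\<Psi> w))) ` {w. Re w > - 1 / 2}"
    by (intro image_eqI) simp_all
next
  fix w :: complex assume "w \<in> {w. Re w > - 1 / 2}"
  then show "Complex (Re w) (Im (\<Psi> w)) \<in> (\<lambda>z. h z + cnj (g z)) ` unit_disk"
    using shear_half_plane_to_disk half_plane_to_disk_in_disk
    by (intro image_eqI[of _ _ "half_plane_to_disk w"]) simp_all
qed

lemma inj_on_shear: "inj_on (\<lambda>z. h z + cnj (g z)) unit_disk"
proof (rule inj_onI)
  fix z\<^sub>1 z\<^sub>2 assume z: "z\<^sub>1 \<in> unit_disk" "z\<^sub>2 \<in> unit_disk"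
    and eq: "h z\<^sub>1 + cnj (g z\<^sub>1) = h z\<^sub>2 + cnj (g z\<^sub>2)"
  define w\<^sub>1 w\<^sub>2 where "w\<^sub>1 = z\<^sub>1 / (1 - z\<^sub>1)" and "w\<^sub>2 = z\<^sub>2 / (1 - z\<^sub>2)"
  have w: "Re w\<^sub>1 > - 1 / 2" "Re w\<^sub>2 > - 1 / 2"
    using z Re_disk_to_half_plane_gt by (simp_all add: w\<^sub>1_def w\<^sub>2_def)
  have z_eq: "z\<^sub>1 = half_plane_to_disk w\<^sub>1" "z\<^sub>2 = half_plane_to_disk w\<^sub>2"
    using z disk_to_half_plane_to_disk by (simp_all add: w\<^sub>1_def w\<^sub>2_def)
  with eq shear_half_plane_to_disk[OF w(1)] shear_half_plane_to_disk[OF w(2)]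
  have Re_eq: "Re w\<^sub>1 = Re w\<^sub>2" and Im_eq: "Im (\<Psi> w\<^sub>1) = Im (\<Psi> w\<^sub>2)" by simp_all
  have "Im w\<^sub>1 = Im w\<^sub>2"
  proof (rule ccontr)
    have w\<^sub>1: "w\<^sub>1 = Complex (Re w\<^sub>2) (Im w\<^sub>1)" and w\<^sub>2: "w\<^sub>2 = Complex (Re w\<^sub>2) (Im w\<^sub>2)"
      using Re_eq by (simp_all add: complex_eq_iff)
    have H: "Complex (Re w\<^sub>2) s \<in> {w. Re w > - 1 / 2}" for s using w(2) by simp
    assume "Im w\<^sub>1 \<noteq> Im w\<^sub>2"
    then consider "Im w\<^sub>1 < Im w\<^sub>2" | "Im w\<^sub>2 < Im w\<^sub>1" by linarith
    then show False
    proof cases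
      case 1
      from strictly_monotone_on_Im_increasing[OF \<Psi>_strictly_monotone H H 1] Im_eq show False
        by (simp flip: w\<^sub>1 w\<^sub>2)
    next
      case 2
      from strictly_monotone_on_Im_increasing[OF \<Psi>_strictly_monotone H H 2] Im_eq show False
        by (simp flip: w\<^sub>1 w\<^sub>2)
    qed
  qed
  with Re_eq have "w\<^sub>1 = w\<^sub>2" by (simp add: complex_eq_iff)
  with z_eq show "z\<^sub>1 = z\<^sub>2" by simp
qed

lemma convex_in_direction_0_shear:
  "convex_in_direction 0 ((\<lambda>z. h z + cnj (g z)) ` unit_disk)"
  unfolding convex_in_direction_0_iff image_shear
proof
  fix d
  have "{z. Im z = d} \<inter> (\<lambda>w. Complex (Re w) (Im (\<Psi> w))) ` {w. Re w > - 1 / 2}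
      = (\<lambda>x. Complex x d) ` {x. - 1 / 2 < x \<and> (\<exists>s. Im (\<Psi> (Complex x s)) = d)}"
  proof (intro equalityI subsetI)
    fix z assume "z \<in> {z. Im z = d} \<inter> (\<lambda>w. Complex (Re w) (Im (\<Psi> w))) ` {w. Re w > - 1 / 2}"
    then obtain w where "Re w > - 1 / 2" "Im (\<Psi> (Complex (Re w) (Im w))) = d" "z = Complex (Re w) d"
      by auto
    then show "z \<in> (\<lambda>x. Complex x d) ` {x. - 1 / 2 < x \<and> (\<exists>s. Im (\<Psi> (Complex x s)) = d)}"
      by blast
  next
    fix z assume "z \<in> (\<lambda>x. Complex x d) ` {x. - 1 / 2 < x \<and> (\<exists>s. Im (\<Psi> (Complex x s)) = d)}"
    then obtain x s where "- 1 / 2 < x" "Im (\<Psi> (Complex x s)) = d" "z = Complex x d" by auto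
    then show "z \<in> {z. Im z = d} \<inter> (\<lambda>w. Complex (Re w) (Im (\<Psi> w))) ` {w. Re w > - 1 / 2}"
      by (auto intro!: image_eqI[of _ _ "Complex x s"])
  qed
  moreover have "connected ((\<lambda>x. Complex x d) ` {x. - 1 / 2 < x \<and> (\<exists>s. Im (\<Psi> (Complex x s)) = d)})"
    by (rule connected_continuous_image[OF _ strictly_monotone_on_half_plane_level_connected[OF
          \<Psi>_strictly_monotone continuous_on_\<Psi>]])
      (intro continuous_on_Complex continuous_on_id continuous_on_const)
  ultimately show "connected ({z. Im z = d} \<inter> (\<lambda>w. Complex (Re w) (Im (\<Psi> w))) ` {w. Re w > - 1 / 2})"
    by simp
qed

lemma convex_in_direction_pi_half_shear:
  "convex_in_direction (pi / 2) ((\<lambda>z. h z + cnj (g z)) ` unit_disk)"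
  unfolding convex_in_direction_pi_half_iff image_shear
proof
  fix c
  define S where "S = {w. Re w \<ge> c} \<inter> {w. Re w \<le> c} \<inter> {w. Re w > - 1 / 2}"
  have "continuous_on {w. Re w > - 1 / 2} (\<lambda>w. Complex (Re w) (Im (\<Psi> w)))"
    by (intro continuous_intros continuous_on_\<Psi>)
  then have "continuous_on S (\<lambda>w. Complex (Re w) (Im (\<Psi> w)))"
    by (rule continuous_on_subset) (auto simp: S_def)
  moreover have "connected S" unfolding S_def
    by (intro convex_connected convex_Int convex_halfspace_Re_ge convex_halfspace_Re_le
        convex_halfspace_Re_gt)
  ultimately have "connected ((\<lambda>w. Complex (Re w) (Im (\<Psi> w))) ` S)"
    by (rule connected_continuous_image)
  moreover have "{z. Re z = c} \<inter> (\<lambda>w. Complex (Re w) (Im (\<Psi> w))) ` {w. Re w > - 1 / 2}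
      = (\<lambda>w. Complex (Re w) (Im (\<Psi> w))) ` S"
    unfolding S_def by force
  ultimately show "connected ({z. Re z = c} \<inter> (\<lambda>w. Complex (Re w) (Im (\<Psi> w))) ` {w. Re w > - 1 / 2})"
    by simp
qed

lemma SH_pair_shear:
  assumes "h 0 + cnj (g 0) = 0" "deriv h 0 = 1"
  shows "SH_pair h g"
  unfolding SH_pair_def
proof (intro conjI ballI holomorphic_h holomorphic_g inj_on_shear assms)
  fix z assume "z \<in> unit_disk"
  with norm_deriv_less have "norm (deriv g z) < norm (deriv h z)" .
  then have "0 < norm (deriv h z)" by (rule le_less_trans[OF norm_ge_zero])
  with \<open>norm (deriv g z) < norm (deriv h z)\<close>
  show "deriv h z \<noteq> 0" "norm (deriv g z / deriv h z) < 1"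
    by (simp_all add: norm_divide)
qed

end

lemma half_plane_shear_if_SH_pair:
  assumes "SH_pair h g" and "\<And>z. z \<in> unit_disk \<Longrightarrow> h z + g z = z / (1 - z)"
  shows "half_plane_shear h g"
proof
  show "h holomorphic_on unit_disk" "g holomorphic_on unit_disk"
    using assms(1) by (simp_all add: SH_pair_def)
next
  fix z :: complex assume "z \<in> unit_disk"
  then show "h z + g z = z / (1 - z)" by (rule assms(2))
  from \<open>z \<in> unit_disk\<close> assms(1) have "deriv h z \<noteq> 0" "norm (deriv g z / deriv h z) < 1"
    by (simp_all add: SH_pair_def)
  then show "norm (deriv g z) < norm (deriv h z)" by (simp add: norm_divide)
qed

lemma deriv_linear_combination:
  assumes "f\<^sub>1 holomorphic_on S" "f\<^sub>2 holomorphic_on S" "open S" "z \<in> S"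
  shows "deriv (\<lambda>z. a * f\<^sub>1 z + b * f\<^sub>2 z) z = a * deriv f\<^sub>1 z + b * deriv f\<^sub>2 z"
proof -
  have "f\<^sub>1 field_differentiable at z" "f\<^sub>2 field_differentiable at z"
    using assms by (simp_all add: holomorphic_on_imp_differentiable_at)
  then show ?thesis by (simp add: field_differentiable_mult field_differentiable_const)
qed

lemma half_plane_shear_convex_combination:
  assumes "half_plane_shear h\<^sub>1 g\<^sub>1" "half_plane_shear h\<^sub>2 g\<^sub>2" "0 \<le> t" "t \<le> 1"
  shows "half_plane_shear (\<lambda>z. of_real t * h\<^sub>1 z + of_real (1 - t) * h\<^sub>2 z)
                          (\<lambda>z. of_real t * g\<^sub>1 z + of_real (1 - t) * g\<^sub>2 z)"
proof -
  interpret s\<^sub>1: half_plane_shear h\<^sub>1 g\<^sub>1 by fact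
  interpret s\<^sub>2: half_plane_shear h\<^sub>2 g\<^sub>2 by fact
  show ?thesis
  proof
    show "(\<lambda>z. of_real t * h\<^sub>1 z + of_real (1 - t) * h\<^sub>2 z) holomorphic_on unit_disk"
      "(\<lambda>z. of_real t * g\<^sub>1 z + of_real (1 - t) * g\<^sub>2 z) holomorphic_on unit_disk"
      by (intro holomorphic_intros s\<^sub>1.holomorphic_h s\<^sub>2.holomorphic_h s\<^sub>1.holomorphic_g
          s\<^sub>2.holomorphic_g)+
  next
    fix z :: complex assume z: "z \<in> unit_disk"
    have "of_real t * h\<^sub>1 z + of_real (1 - t) * h\<^sub>2 z + (of_real t * g\<^sub>1 z + of_real (1 - t) * g\<^sub>2 z)
        = of_real t * (h\<^sub>1 z + g\<^sub>1 z) + of_real (1 - t) * (h\<^sub>2 z + g\<^sub>2 z)"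
      by (simp add: algebra_simps)
    also have "\<dots> = (of_real t + of_real (1 - t)) * (z / (1 - z))"
      by (simp only: s\<^sub>1.add_eq[OF z] s\<^sub>2.add_eq[OF z] distrib_right)
    also have "\<dots> = z / (1 - z)" by simp
    finally show "of_real t * h\<^sub>1 z + of_real (1 - t) * h\<^sub>2 z + (of_real t * g\<^sub>1 z + of_real (1 - t) * g\<^sub>2 z)
        = z / (1 - z)" .
    show "norm (deriv (\<lambda>z. of_real t * g\<^sub>1 z + of_real (1 - t) * g\<^sub>2 z) z)
        < norm (deriv (\<lambda>z. of_real t * h\<^sub>1 z + of_real (1 - t) * h\<^sub>2 z) z)"
      unfolding deriv_linear_combination[OF s\<^sub>1.holomorphic_h s\<^sub>2.holomorphic_h open_ball z]
        deriv_linear_combination[OF s\<^sub>1.holomorphic_g s\<^sub>2.holomorphic_g open_ball z]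
      by (rule norm_lt_convex_combination[OF s\<^sub>1.deriv_add_eq[OF z] s\<^sub>2.deriv_add_eq[OF z]
          s\<^sub>1.norm_deriv_less[OF z] s\<^sub>2.norm_deriv_less[OF z] assms(3,4)])
  qed
qed

theorem theorem2p5:
  fixes h1 g1 h2 g2 :: "complex \<Rightarrow> complex" and t :: real
  assumes "SH_pair h1 g1" and "SH_pair h2 g2"
    and "\<forall>z\<in>unit_disk. h1 z + g1 z = z / (1 - z)"
    and "\<forall>z\<in>unit_disk. h2 z + g2 z = z / (1 - z)"
    and "0 \<le> t" and "t \<le> 1"
  shows "COD_H 0 (\<lambda>z. of_real t * (h1 z + cnj (g1 z)) + of_real (1 - t) * (h2 z + cnj (g2 z)))"
proof -
  define h where "h z = of_real t * h1 z + of_real (1 - t) * h2 z" for z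
  define g where "g z = of_real t * g1 z + of_real (1 - t) * g2 z" for z
  interpret half_plane_shear h g
    unfolding h_def g_def using assms
    by (intro half_plane_shear_convex_combination half_plane_shear_if_SH_pair) auto
  have f: "(\<lambda>z. of_real t * (h1 z + cnj (g1 z)) + of_real (1 - t) * (h2 z + cnj (g2 z)))
      = (\<lambda>z. h z + cnj (g z))"
    by (simp add: h_def g_def algebra_simps)
  have "h 0 + cnj (g 0) = of_real t * (h1 0 + cnj (g1 0)) + of_real (1 - t) * (h2 0 + cnj (g2 0))"
    by (simp add: h_def g_def algebra_simps)
  moreover have "deriv h 0 = of_real t * deriv h1 0 + of_real (1 - t) * deriv h2 0"
    unfolding h_def[abs_def] using assms(1,2)
    by (intro deriv_linear_combination) (auto simp: SH_pair_def)
  ultimately have "SH_pair h g"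
    using assms(1,2) by (intro SH_pair_shear) (simp_all add: SH_pair_def)
  then show ?thesis
    unfolding COD_H_def in_SH_def f
    using convex_in_direction_0_shear convex_in_direction_pi_half_shear by auto
qed

end
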